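(* Let $\lambda>0$, let $E_1,E_2,\ldots$ be i.i.d. $\text{Exp}(\lambda)$ random variables, and let $$X=\prod_{i=1}^{\infty}\min\left\{\sum_{k=1}^iE_k,1\right\}.$$ Then for every $t\in(0,1)$, $$\mathbb{P}(X\le t)=\mathbb{P}(N>N^* ),$$ where $N\sim\text{Pois}(\lambda)$ and $N^*\sim\text{Pois}(-\log t)$ are independent.
   Context: $\text{Exp}(\lambda)$ denotes the exponential distribution with rate $\lambda$ (mean $1/\lambda$); $\text{Pois}(\mu)$ denotes the Poisson distribution with mean $\mu$. *)

theory Defs
  imports "HOL-Probability.Probability"
begin

definition poisson_pmf :: "real \<Rightarrow> nat pmf" where
  "poisson_pmf mu = embed_pmf (\<lambda>k. exp (- mu) * mu ^ k / fact k)"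

end

theory Submission
  imports Defs
begin

text \<open>
  The partial sums S 0 < S 1 < ... are the points of a Poisson process of rate l, and if n is the
  first index with S n > 1, then X = P n = S 0 * ... * S (n - 1). Conditioning on the last jump and
  applying Fubini, induction on n shows that on the event P (n + 1) <= y the variable S n has density
  l^(n+1) * exp (- l * u) * K n u y, where K n u y is the volume of
  {0 < s_0 < ... < s_(n-1) < u | s_0 * ... * s_(n-1) * u <= y}; these volumes satisfy
  K (n + 1) v y = (integral of K n u (y / v) over 0 < u <= v).
  Integrating out the jump across 1 gives
  P(first crossing at n, X <= t) = l^n * exp (- l) * K n 1 t = P(N = n) * t * (sum of (- ln t)^j / j! over j < n),
  which is P(N = n) * P(N* < n); summing over n proves the theorem.
\<close>

text \<open>The function K of the proof sketch: the volume of
  {0 < s_0 < ... < s_(n-1) < u | s_0 * ... * s_(n-1) * u <= y}. The product constraint is vacuous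
  exactly when u^(n+1) <= y.\<close>

definition simplex_prod_vol :: "nat \<Rightarrow> real \<Rightarrow> real \<Rightarrow> real" where
  "simplex_prod_vol n u y = (if u ^ (n+1) \<le> y then u ^ n / fact n
     else (y / u) / fact n * (\<Sum>j<n. ((real n + 1) * ln u - ln y) ^ j / fact j))"

lemma simplex_prod_vol_nonneg:
  assumes "0 < u" "0 < y" shows "0 \<le> simplex_prod_vol n u y"
proof (cases "u ^ (n+1) \<le> y")
  case False
  then have "ln y < ln (u ^ (n+1))" using assms by simp
  also have "ln (u ^ (n+1)) = (real n + 1) * ln u"
    using ln_realpow[of u "n+1"] assms by (simp add: add.commute)
  finally have "ln y < (real n + 1) * ln u" .
  then have "0 \<le> (\<Sum>j<n. ((real n + 1) * ln u - ln y) ^ j / fact j)"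
    by (intro sum_nonneg) auto
  then show ?thesis using False assms by (simp add: simplex_prod_vol_def)
qed (use assms in \<open>simp add: simplex_prod_vol_def\<close>)

lemma measurable_simplex_prod_vol [measurable]: "(\<lambda>u. simplex_prod_vol n u y) \<in> borel_measurable borel"
  unfolding simplex_prod_vol_def by measurable

lemma nn_integral_power_over_fact:
  fixes a :: real assumes "0 \<le> a"
  shows "(\<integral>\<^sup>+u. ennreal (u ^ n / fact n) * indicator {0..a} u \<partial>lborel) = ennreal (a ^ (n+1) / fact (n+1))"
proof -
  have "((\<lambda>u. u ^ (n+1) / fact (n+1)) has_real_derivative x ^ n / fact n) (at x)" for x :: real
  proof -
    have "((\<lambda>u. u ^ (n+1) / fact (n+1)) has_real_derivative (real (n+1) * x ^ n) / fact (n+1)) (at x)"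
      using DERIV_pow[of "n+1" x] by (intro DERIV_cdivide) simp
    moreover have "(real (n+1) * x ^ n) / fact (n+1) = x ^ n / fact n"
      by (simp del: of_nat_Suc add: field_simps)
    ultimately show ?thesis by simp
  qed
  then have "(\<integral>\<^sup>+u. ennreal (u ^ n / fact n) * indicator {0..a} u \<partial>lborel)
      = ennreal (a ^ (n+1) / fact (n+1) - 0 ^ (n+1) / fact (n+1))"
    using assms by (intro nn_integral_FTC_Icc) auto
  then show ?thesis by simp
qed

lemma has_real_derivative_ln_power:
  fixes a b x :: real
  assumes "0 < a" "0 < x"
  shows "((\<lambda>x. (a * ln x - b) ^ Suc j / (a * fact (Suc j)))
          has_real_derivative (a * ln x - b) ^ j / (x * fact j)) (at x)"
proof -
  have "((\<lambda>x. (a * ln x - b) ^ Suc j / (a * fact (Suc j)))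
          has_real_derivative ((1 + real j) * (a / x * (a * ln x - b) ^ j)) / (a * fact (Suc j))) (at x)"
  proof (intro DERIV_cdivide DERIV_power_Suc)
    show "((\<lambda>x. a * ln x - b) has_real_derivative a / x) (at x)"
      using assms by (auto intro!: derivative_eq_intros)
  qed
  moreover have "((1 + real j) * (a / x * (a * ln x - b) ^ j)) / (a * fact (Suc j))
      = (a * ln x - b) ^ j / (x * fact j)"
  proof -
    have fact_Suc_j: "fact (Suc j) = (1 + real j) * (fact j :: real)" by simp
    have "a \<noteq> 0" "1 + real j \<noteq> 0" "x \<noteq> 0" "(fact j :: real) \<noteq> 0" using assms by auto
    then show ?thesis unfolding fact_Suc_j by (simp only: field_simps) simp
  qed
  ultimately show ?thesis by simp
qed

lemma nn_integral_ln_power_sum: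
  fixes a b c v :: real
  assumes "0 < a" "0 < c" "c \<le> v" "a * ln c = b"
  shows "(\<integral>\<^sup>+u. ennreal ((\<Sum>j<n. (a * ln u - b) ^ j / fact j) / u) * indicator {c..v} u \<partial>lborel)
    = ennreal (\<Sum>j<n. (a * ln v - b) ^ Suc j / (a * fact (Suc j)))"
proof -
  define F where "F x = (\<Sum>j<n. (a * ln x - b) ^ Suc j / (a * fact (Suc j)))" for x
  have "(\<integral>\<^sup>+u. ennreal ((\<Sum>j<n. (a * ln u - b) ^ j / fact j) / u) * indicator {c..v} u \<partial>lborel)
      = ennreal (F v - F c)"
  proof (rule nn_integral_FTC_Icc)
    fix x assume x: "x \<in> {c..v}"
    then have "0 < x" using assms by auto
    have "(F has_real_derivative (\<Sum>j<n. (a * ln x - b) ^ j / (x * fact j))) (at x)"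
      unfolding F_def[abs_def]
      by (intro DERIV_sum has_real_derivative_ln_power \<open>0 < a\<close> \<open>0 < x\<close>)
    moreover have "(\<Sum>j<n. (a * ln x - b) ^ j / (x * fact j)) = (\<Sum>j<n. (a * ln x - b) ^ j / fact j) / x"
      by (simp add: sum_divide_distrib ac_simps)
    ultimately show "(F has_real_derivative (\<Sum>j<n. (a * ln x - b) ^ j / fact j) / x) (at x)"
      by simp
    have "b \<le> a * ln x" using assms x \<open>0 < x\<close> by auto
    then show "0 \<le> (\<Sum>j<n. (a * ln x - b) ^ j / fact j) / x"
      using \<open>0 < x\<close> by (auto intro!: sum_nonneg divide_nonneg_nonneg)
  qed (use assms in auto)
  moreover have "F c = 0" using assms by (simp add: F_def)
  ultimately show ?thesis by (simp add: F_def)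
qed

lemma nn_integral_simplex_prod_vol_unconstrained:
  assumes "0 < v" "v ^ (n+1) \<le> w"
  shows "(\<integral>\<^sup>+u. ennreal (simplex_prod_vol n u w) * indicator {0<..v} u \<partial>lborel)
    = ennreal (v ^ (n+1) / fact (n+1))"
proof -
  have "AE u in lborel. ennreal (simplex_prod_vol n u w) * indicator {0<..v} u
      = ennreal (u ^ n / fact n) * indicator {0..v} u"
    using AE_lborel_singleton[of 0]
  proof eventually_elim
    case (elim u)
    show ?case
    proof (cases "0 < u \<and> u \<le> v")
      case True
      then have "u ^ (n+1) \<le> w" using assms power_mono[of u v "n+1"] by linarith
      then show ?thesis using True by (simp add: simplex_prod_vol_def del: power_Suc)
    qed (use elim in \<open>auto simp: indicator_def\<close>)
  qed
  then have "(\<integral>\<^sup>+u. ennreal (simplex_prod_vol n u w) * indicator {0<..v} u \<partial>lborel)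
      = (\<integral>\<^sup>+u. ennreal (u ^ n / fact n) * indicator {0..v} u \<partial>lborel)"
    by (rule nn_integral_cong_AE)
  then show ?thesis using nn_integral_power_over_fact[of v n] assms by simp
qed

lemma simplex_prod_vol_eq_root:
  assumes "0 < u" "0 < w"
  shows "simplex_prod_vol n u w = (if u \<le> root (n+1) w then u ^ n / fact n
    else w / fact n * ((\<Sum>j<n. ((real n + 1) * ln u - ln w) ^ j / fact j) / u))"
proof -
  have "u \<le> root (n+1) w \<longleftrightarrow> root (n+1) (u ^ (n+1)) \<le> root (n+1) w"
    using real_root_power_cancel[of "n+1" u] assms by simp
  also have "\<dots> \<longleftrightarrow> u ^ (n+1) \<le> w" by (rule real_root_le_iff) simp
  finally show ?thesis by (simp add: simplex_prod_vol_def del: power_Suc)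
qed

lemma AE_simplex_prod_vol_split:
  fixes n :: nat and w v c :: real
  defines "c \<equiv> root (Suc n) w"
  assumes "0 < w" "c < v"
  shows "AE u in lborel. ennreal (simplex_prod_vol n u w) * indicator {0<..v} u
    = ennreal (u ^ n / fact n) * indicator {0..c} u
      + ennreal (w / fact n) * (ennreal ((\<Sum>j<n. ((real n + 1) * ln u - ln w) ^ j / fact j) / u)
          * indicator {c..v} u)"
  using AE_lborel_singleton[of 0] AE_lborel_singleton[of c]
proof eventually_elim
  case (elim u)
  have "0 < c" using assms by (simp add: c_def)
  consider "u < 0" | "0 < u" "u < c" | "c < u" "u \<le> v" | "v < u" using elim by linarith
  then show ?case
  proof cases
    case 2
    then show ?thesis using assms by (simp add: simplex_prod_vol_eq_root indicator_def)
  next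
    case 3
    then have "0 < u" using \<open>0 < c\<close> by linarith
    then have vol_eq: "simplex_prod_vol n u w
        = w / fact n * ((\<Sum>j<n. ((real n + 1) * ln u - ln w) ^ j / fact j) / u)"
      using 3 assms by (simp add: simplex_prod_vol_eq_root)
    have "ennreal (simplex_prod_vol n u w)
        = ennreal (w / fact n) * ennreal ((\<Sum>j<n. ((real n + 1) * ln u - ln w) ^ j / fact j) / u)"
      unfolding vol_eq by (rule ennreal_mult') (use assms in simp)
    then show ?thesis using 3 \<open>0 < c\<close> by (simp add: indicator_def)
  qed (use \<open>c < v\<close> \<open>0 < c\<close> in \<open>auto simp: indicator_def\<close>)
qed

lemma nn_integral_simplex_prod_vol_constrained:
  assumes "0 < v" "0 < w" "w < v ^ (n+1)"
  shows "(\<integral>\<^sup>+u. ennreal (simplex_prod_vol n u w) * indicator {0<..v} u \<partial>lborel)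
    = ennreal (w / fact (n+1) * (\<Sum>j<n+1. ((real n + 1) * ln v - ln w) ^ j / fact j))"
proof -
  define c where "c = root (Suc n) w"
  define L where "L = (real n + 1) * ln v - ln w"
  have "0 < c" "c ^ (n+1) = w" "(real n + 1) * ln c = ln w"
    using assms by (simp_all add: c_def real_root_pow_pos ln_root add.commute del: power_Suc)
  have "c < v"
    using assms \<open>c ^ (n+1) = w\<close> by (metis power_less_imp_less_base less_imp_le)
  then have "0 \<le> L"
    using \<open>0 < c\<close> \<open>(real n + 1) * ln c = ln w\<close> mult_left_mono[of "ln c" "ln v" "real n + 1"]
    by (simp add: L_def)
  from AE_simplex_prod_vol_split[OF \<open>0 < w\<close>, of n v, folded c_def, OF \<open>c < v\<close>]
  have "(\<integral>\<^sup>+u. ennreal (simplex_prod_vol n u w) * indicator {0<..v} u \<partial>lborel)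
      = ennreal (w / fact (n+1))
        + ennreal (w / fact n) * ennreal (\<Sum>j<n. L ^ Suc j / ((real n + 1) * fact (Suc j)))"
    using \<open>0 < c\<close> \<open>c < v\<close> \<open>c ^ (n+1) = w\<close> \<open>(real n + 1) * ln c = ln w\<close>
    by (simp add: nn_integral_cong_AE nn_integral_add nn_integral_cmult nn_integral_power_over_fact
        nn_integral_ln_power_sum L_def del: power_Suc)
  also have "\<dots> = ennreal (w / fact (n+1) + w / fact n * (\<Sum>j<n. L ^ Suc j / ((real n + 1) * fact (Suc j))))"
    using assms \<open>0 \<le> L\<close> by (simp add: ennreal_mult[symmetric] sum_nonneg)
  also have "w / fact (n+1) + w / fact n * (\<Sum>j<n. L ^ Suc j / ((real n + 1) * fact (Suc j)))
      = w / fact (n+1) * (\<Sum>j<n+1. L ^ j / fact j)"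
  proof -
    have "(\<Sum>j<n+1. L ^ j / fact j) = 1 + (\<Sum>j<n. L ^ Suc j / fact (Suc j))"
      by (simp only: Suc_eq_plus1[symmetric] sum.lessThan_Suc_shift) simp
    moreover have "w / fact n * (\<Sum>j<n. L ^ Suc j / ((real n + 1) * fact (Suc j)))
        = w / fact (n+1) * (\<Sum>j<n. L ^ Suc j / fact (Suc j))"
      by (simp add: sum_distrib_left field_simps)
    ultimately show ?thesis by (simp add: distrib_left)
  qed
  finally show ?thesis by (simp add: L_def)
qed

lemma nn_integral_simplex_prod_vol:
  assumes "0 < v" "0 < y"
  shows "(\<integral>\<^sup>+u. ennreal (simplex_prod_vol n u (y / v)) * indicator {0<..v} u \<partial>lborel)
    = ennreal (simplex_prod_vol (Suc n) v y)"
proof (cases "v ^ (n+1) \<le> y / v")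
  case True
  then have "v ^ (Suc n + 1) \<le> y" using assms by (simp add: field_simps)
  then show ?thesis
    using nn_integral_simplex_prod_vol_unconstrained[OF \<open>0 < v\<close> True]
    by (simp add: simplex_prod_vol_def del: power_Suc fact_Suc)
next
  case False
  then have "\<not> v ^ (Suc n + 1) \<le> y" using assms by (simp add: field_simps)
  moreover have "(real (Suc n) + 1) * ln v - ln y = (real n + 1) * ln v - ln (y / v)"
    using assms by (simp add: ln_div algebra_simps)
  ultimately show ?thesis
    using nn_integral_simplex_prod_vol_constrained[of v "y / v" n] False assms
    by (simp add: simplex_prod_vol_def del: power_Suc)
qed

lemma nn_integral_simplex_prod_vol_exp:
  fixes l :: real
  assumes "0 \<le> l" "0 < v" "0 < y"
  shows "(\<integral>\<^sup>+u. indicator {0<..} u * (indicator {..v} u * ennreal (exp (l * u)))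
      * ennreal (l ^ Suc n * exp (- l * u) * simplex_prod_vol n u (y / v)) \<partial>lborel)
    = ennreal (l ^ Suc n * simplex_prod_vol (Suc n) v y)"
proof -
  have "(\<integral>\<^sup>+u. indicator {0<..} u * (indicator {..v} u * ennreal (exp (l * u)))
      * ennreal (l ^ Suc n * exp (- l * u) * simplex_prod_vol n u (y / v)) \<partial>lborel)
    = (\<integral>\<^sup>+u. ennreal (l ^ Suc n) * (ennreal (simplex_prod_vol n u (y / v)) * indicator {0<..v} u) \<partial>lborel)"
  proof (rule nn_integral_cong)
    fix u :: real
    have "exp (l * u) * exp (- l * u) = 1" by (simp add: exp_add[symmetric])
    then show "indicator {0<..} u * (indicator {..v} u * ennreal (exp (l * u)))
        * ennreal (l ^ Suc n * exp (- l * u) * simplex_prod_vol n u (y / v))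
      = ennreal (l ^ Suc n) * (ennreal (simplex_prod_vol n u (y / v)) * indicator {0<..v} u)"
      using assms simplex_prod_vol_nonneg[of u "y / v" n]
      by (auto simp: indicator_def ennreal_mult[symmetric] ac_simps)
  qed
  also have "\<dots> = ennreal (l ^ Suc n) * ennreal (simplex_prod_vol (Suc n) v y)"
    using assms by (simp add: nn_integral_cmult nn_integral_simplex_prod_vol)
  finally show ?thesis
    using assms simplex_prod_vol_nonneg[of v y "Suc n"] by (simp add: ennreal_mult)
qed

lemma ennreal_exponential_density_diff:
  fixes l :: real
  assumes "0 \<le> l"
  shows "ennreal (exponential_density l (v - s))
    = ennreal (l * exp (- l * v)) * (indicator {..v} s * ennreal (exp (l * s)))"
proof (cases "s \<le> v")
  case True
  have "exp (- (v - s) * l) = exp (- l * v) * exp (l * s)"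
    by (simp add: exp_add[symmetric] algebra_simps)
  then show ?thesis using True assms by (simp add: exponential_density_def ennreal_mult mult.assoc)
qed (simp add: exponential_density_def)

lemma convergent_prod_iff_Cauchy:
  "convergent_prod (g :: nat \<Rightarrow> real)
    \<longleftrightarrow> (\<exists>N. Cauchy (\<lambda>n. \<Prod>i\<le>n. g (i + N)) \<and> lim (\<lambda>n. \<Prod>i\<le>n. g (i + N)) \<noteq> 0)"
  unfolding convergent_prod_def raw_has_prod_def Cauchy_convergent_iff convergent_def
  by (auto dest: limI)

lemma prodinf_eq_lim_if:
  "prodinf (g :: nat \<Rightarrow> real) = (if convergent_prod g then lim (\<lambda>n. \<Prod>i\<le>n. g i) else (THE p. False))"
proof (cases "convergent_prod g")
  case True
  then show ?thesis using convergent_prod_LIMSEQ[OF True] by (simp add: limI)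
next
  case False
  then have "(has_prod) g = (\<lambda>p. False)" by (auto simp: fun_eq_iff has_prod_iff)
  then show ?thesis using False by (simp add: prodinf_def)
qed

lemma borel_measurable_prodinf [measurable]:
  fixes f :: "nat \<Rightarrow> 'a \<Rightarrow> real"
  assumes [measurable]: "\<And>i. f i \<in> borel_measurable M"
  shows "(\<lambda>x. \<Prod>i. f i x) \<in> borel_measurable M"
proof -
  have [measurable]: "Measurable.pred M (\<lambda>x. convergent_prod (\<lambda>i. f i x))"
    unfolding convergent_prod_iff_Cauchy by measurable
  show ?thesis unfolding prodinf_eq_lim_if by measurable
qed

lemma pmf_poisson_pmf:
  assumes "0 \<le> mu"
  shows "pmf (poisson_pmf mu) k = exp (- mu) * mu ^ k / fact k"
  unfolding poisson_pmf_def
proof (rule pmf_embed_pmf)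
  have "(\<lambda>k. exp (- mu) * mu ^ k / fact k) sums (exp (- mu) * exp mu)"
    using sums_mult[OF exp_converges[of mu], of "exp (- mu)"] by (simp add: field_simps)
  then show "(\<integral>\<^sup>+k. ennreal (exp (- mu) * mu ^ k / fact k) \<partial>count_space UNIV) = 1"
    using assms by (simp add: nn_integral_count_space_nat suminf_ennreal2 sums_iff mult_exp_exp)
qed (use assms in simp)

lemma emeasure_pair_pmf_less:
  "emeasure (pair_pmf A B) {(n, m). m < n} = (\<Sum>n. ennreal (pmf A n * measure_pmf.prob B {..<n}))"
proof -
  have "emeasure (pair_pmf A B) {(n, m). m < n}
      = (\<integral>\<^sup>+n. \<integral>\<^sup>+m. indicator {(n, m). m < n} (n, m) \<partial>B \<partial>A)"
    by (simp add: nn_integral_pair_pmf' flip: nn_integral_indicator)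
  also have "\<dots> = (\<integral>\<^sup>+n. emeasure B {..<n} \<partial>A)"
    by (intro nn_integral_cong) (auto simp: indicator_def simp flip: nn_integral_indicator)
  also have "\<dots> = (\<Sum>n. ennreal (pmf A n * measure_pmf.prob B {..<n}))"
    by (simp add: nn_integral_measure_pmf nn_integral_count_space_nat measure_pmf.emeasure_eq_measure
        ennreal_mult)
  finally show ?thesis .
qed

lemma poisson_pmf_prob_less:
  assumes "0 < t" "t < 1" "0 \<le> l"
  shows "pmf (poisson_pmf l) n * measure_pmf.prob (poisson_pmf (- ln t)) {..<n}
    = l ^ n * exp (- l) * simplex_prod_vol n 1 t"
proof -
  have "measure_pmf.prob (poisson_pmf (- ln t)) {..<n} = (\<Sum>m<n. t * (- ln t) ^ m / fact m)"
    using assms by (simp add: measure_measure_pmf_finite pmf_poisson_pmf)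
  then show ?thesis
    using assms by (simp add: pmf_poisson_pmf simplex_prod_vol_def sum_distrib_left field_simps)
qed

locale iid_exponential = prob_space +
  fixes E :: "nat \<Rightarrow> 'a \<Rightarrow> real" and l :: real
  assumes rate_pos: "0 < l"
    and indep_E: "indep_vars (\<lambda>_. borel) E UNIV"
    and distributed_E: "\<And>i. distributed M lborel (E i) (exponential_density l)"
begin

definition S :: "nat \<Rightarrow> 'a \<Rightarrow> real" where
  "S n \<omega> = (\<Sum>k\<le>n. E k \<omega>)"

definition P :: "nat \<Rightarrow> 'a \<Rightarrow> real" where
  "P n \<omega> = (\<Prod>i<n. S i \<omega>)"

lemma measurable_E [measurable]: "E i \<in> borel_measurable M"
  using distributed_measurable[OF distributed_E[of i]] by simp

lemma measurable_S [measurable]: "S n \<in> borel_measurable M"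
  unfolding S_def[abs_def] by measurable

lemma measurable_P [measurable]: "P n \<in> borel_measurable M"
  unfolding P_def[abs_def] by measurable

lemma S_Suc: "S (Suc n) \<omega> = S n \<omega> + E (Suc n) \<omega>"
  by (simp add: S_def)

lemma P_Suc: "P (Suc n) \<omega> = P n \<omega> * S n \<omega>"
  by (simp add: P_def)

lemma S_mono: "(\<And>i. 0 < E i \<omega>) \<Longrightarrow> i \<le> j \<Longrightarrow> S i \<omega> \<le> S j \<omega>"
  unfolding S_def by (intro sum_mono2) (auto intro: less_imp_le)

lemma AE_E_pos: "AE \<omega> in M. \<forall>i. 0 < E i \<omega>"
proof -
  have "AE \<omega> in M. 0 < E i \<omega>" for i
  proof -
    have "\<P>(\<omega> in M. 0 < E i \<omega>) = 1"
      using exponential_distributedD_gt[OF distributed_E _ rate_pos, of 0] by simp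
    then show ?thesis by (simp add: prob_eq_1)
  qed
  then show ?thesis by (simp add: AE_all_countable)
qed

lemma AE_S_pos: "AE \<omega> in M. 0 < S n \<omega>"
  using AE_E_pos by eventually_elim (auto simp: S_def intro: sum_pos)

lemma nn_integral_E: "g \<in> borel_measurable borel \<Longrightarrow>
    (\<integral>\<^sup>+\<omega>. g (E i \<omega>) \<partial>M) = (\<integral>\<^sup>+x. ennreal (exponential_density l x) * g x \<partial>lborel)"
  using distributed_nn_integral[OF distributed_E, of g] by simp

lemma nn_integral_exponential_density_gt:
  assumes "a \<le> b"
  shows "(\<integral>\<^sup>+x. ennreal (exponential_density l x) * indicator {b<..} (a + x) \<partial>lborel)
    = ennreal (exp (- l * (b - a)))"
proof -
  have "(\<integral>\<^sup>+x. ennreal (exponential_density l x) * indicator {b<..} (a + x) \<partial>lborel)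
      = (\<integral>\<^sup>+\<omega>. indicator {b<..} (a + E 0 \<omega>) \<partial>M)"
    by (rule nn_integral_E[symmetric]) measurable
  also have "\<dots> = (\<integral>\<^sup>+\<omega>. indicator {\<omega> \<in> space M. b - a < E 0 \<omega>} \<omega> \<partial>M)"
    by (intro nn_integral_cong) (auto simp: indicator_def)
  also have "\<dots> = emeasure M {\<omega> \<in> space M. b - a < E 0 \<omega>}"
    by (rule nn_integral_indicator) measurable
  also have "\<dots> = ennreal (exp (- l * (b - a)))"
    using exponential_distributedD_gt[OF distributed_E _ rate_pos, of "b - a"] assms
    by (simp add: emeasure_eq_measure algebra_simps)
  finally show ?thesis .
qed

lemma nn_integral_indep_Suc:
  fixes F :: "(nat \<Rightarrow> real) \<Rightarrow> real \<Rightarrow> ennreal"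
  assumes F: "case_prod F \<in> borel_measurable (PiM {..n} (\<lambda>_. borel) \<Otimes>\<^sub>M borel)"
  shows "(\<integral>\<^sup>+\<omega>. F (\<lambda>i\<in>{..n}. E i \<omega>) (E (Suc n) \<omega>) \<partial>M)
    = (\<integral>\<^sup>+\<omega>. (\<integral>\<^sup>+x. ennreal (exponential_density l x) * F (\<lambda>i\<in>{..n}. E i \<omega>) x \<partial>lborel) \<partial>M)"
proof -
  define R where "R \<omega> = (\<lambda>i\<in>{..n}. E i \<omega>)" for \<omega>
  \<comment> \<open>\<open>indep_var\<close> needs both variables in the same type, so \<open>E (Suc n)\<close> enters as a one-point restriction.\<close>
  define R' where "R' \<omega> = (\<lambda>i\<in>{Suc n}. E i \<omega>)" for \<omega>
  let ?PR = "PiM {..n} (\<lambda>_. borel :: real measure)" and ?PR' = "PiM {Suc n} (\<lambda>_. borel :: real measure)"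
  define G where "G = (\<lambda>(f, g). F f (g (Suc n)))"
  have [measurable]: "R \<in> measurable M ?PR" "R' \<in> measurable M ?PR'"
    unfolding R_def R'_def by measurable
  have [measurable]: "G \<in> borel_measurable (?PR \<Otimes>\<^sub>M ?PR')"
    unfolding G_def using F by measurable
  interpret D: prob_space "distr M ?PR' R'" by (rule prob_space_distr) simp
  have "indep_var ?PR R ?PR' R'"
    unfolding R_def R'_def by (rule indep_var_restrict[OF indep_E]) auto
  then have joint: "distr M (?PR \<Otimes>\<^sub>M ?PR') (\<lambda>\<omega>. (R \<omega>, R' \<omega>)) = distr M ?PR R \<Otimes>\<^sub>M distr M ?PR' R'"
    by (simp add: indep_var_distribution_eq)
  have "(\<integral>\<^sup>+\<omega>. F (R \<omega>) (E (Suc n) \<omega>) \<partial>M) = (\<integral>\<^sup>+\<omega>. G (R \<omega>, R' \<omega>) \<partial>M)"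
    by (simp add: G_def R'_def)
  also have "\<dots> = (\<integral>\<^sup>+p. G p \<partial>distr M (?PR \<Otimes>\<^sub>M ?PR') (\<lambda>\<omega>. (R \<omega>, R' \<omega>)))"
    by (simp add: nn_integral_distr)
  also have "\<dots> = (\<integral>\<^sup>+f. \<integral>\<^sup>+g. G (f, g) \<partial>distr M ?PR' R' \<partial>distr M ?PR R)"
    unfolding joint by (simp add: D.nn_integral_fst)
  also have "\<dots> = (\<integral>\<^sup>+\<omega>. \<integral>\<^sup>+g. G (R \<omega>, g) \<partial>distr M ?PR' R' \<partial>M)"
    by (simp add: nn_integral_distr D.borel_measurable_nn_integral_fst)
  also have "\<dots> = (\<integral>\<^sup>+\<omega>. (\<integral>\<^sup>+x. ennreal (exponential_density l x) * F (R \<omega>) x \<partial>lborel) \<partial>M)"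
  proof (rule nn_integral_cong)
    fix \<omega> assume "\<omega> \<in> space M"
    then have "R \<omega> \<in> space ?PR" by (rule measurable_space[OF \<open>R \<in> measurable M ?PR\<close>])
    then have [measurable]: "F (R \<omega>) \<in> borel_measurable borel" "(\<lambda>g. G (R \<omega>, g)) \<in> borel_measurable ?PR'"
      using F by (auto intro: measurable_compose[OF measurable_Pair2'])
    have "(\<integral>\<^sup>+g. G (R \<omega>, g) \<partial>distr M ?PR' R') = (\<integral>\<^sup>+\<omega>'. F (R \<omega>) (E (Suc n) \<omega>') \<partial>M)"
      by (simp add: nn_integral_distr G_def R'_def)
    then show "(\<integral>\<^sup>+g. G (R \<omega>, g) \<partial>distr M ?PR' R')
        = (\<integral>\<^sup>+x. ennreal (exponential_density l x) * F (R \<omega>) x \<partial>lborel)"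
      by (simp add: nn_integral_E)
  qed
  finally show ?thesis unfolding R_def .
qed

lemma nn_integral_indep_Suc_S_P:
  fixes G :: "real \<Rightarrow> real \<Rightarrow> real \<Rightarrow> ennreal"
  assumes G: "(\<lambda>(s, p, x). G s p x) \<in> borel_measurable (borel \<Otimes>\<^sub>M borel \<Otimes>\<^sub>M borel)"
  shows "(\<integral>\<^sup>+\<omega>. G (S n \<omega>) (P (Suc n) \<omega>) (E (Suc n) \<omega>) \<partial>M)
    = (\<integral>\<^sup>+\<omega>. (\<integral>\<^sup>+x. ennreal (exponential_density l x) * G (S n \<omega>) (P (Suc n) \<omega>) x \<partial>lborel) \<partial>M)"
proof -
  define Y where "Y f = ((\<Sum>k\<le>n. f k), (\<Prod>i<Suc n. \<Sum>k\<le>i. f k))" for f :: "nat \<Rightarrow> real"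
  define F where "F f x = G (fst (Y f)) (snd (Y f)) x" for f x
  have [measurable]: "Y \<in> measurable (PiM {..n} (\<lambda>_. borel)) (borel \<Otimes>\<^sub>M borel)"
    unfolding Y_def by measurable
  have "(\<lambda>(f, x). (fst (Y f), snd (Y f), x))
      \<in> measurable (PiM {..n} (\<lambda>_. borel) \<Otimes>\<^sub>M borel) (borel \<Otimes>\<^sub>M borel \<Otimes>\<^sub>M borel)"
    by measurable
  from measurable_compose[OF this G]
  have F: "case_prod F \<in> borel_measurable (PiM {..n} (\<lambda>_. borel) \<Otimes>\<^sub>M borel)"
    by (simp add: F_def case_prod_beta')
  have F_restrict: "F (\<lambda>i\<in>{..n}. E i \<omega>) = G (S n \<omega>) (P (Suc n) \<omega>)" for \<omega>
    unfolding F_def Y_def S_def P_def by (intro ext arg_cong2[where f=G] sum.cong prod.cong) auto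
  show ?thesis using nn_integral_indep_Suc[OF F] unfolding F_restrict .
qed

lemma nn_integral_density_S_Suc:
  fixes G :: "real \<Rightarrow> real \<Rightarrow> real \<Rightarrow> ennreal"
  assumes G: "(\<lambda>(s, p, x). G s p x) \<in> borel_measurable (borel \<Otimes>\<^sub>M borel \<Otimes>\<^sub>M borel)"
  shows "(\<integral>\<^sup>+\<omega>. G (S n \<omega>) (P (Suc n) \<omega>) (S (Suc n) \<omega>) \<partial>M)
    = (\<integral>\<^sup>+v. (\<integral>\<^sup>+\<omega>. ennreal (exponential_density l (v - S n \<omega>)) * G (S n \<omega>) (P (Suc n) \<omega>) v \<partial>M) \<partial>lborel)"
proof -
  interpret pair_sigma_finite M lborel
    by (simp add: pair_sigma_finite_def sigma_finite_measure_axioms lborel.sigma_finite_measure_axioms)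
  define F where "F \<omega> v = ennreal (exponential_density l (v - S n \<omega>)) * G (S n \<omega>) (P (Suc n) \<omega>) v" for \<omega> v
  have "(\<lambda>x. (S n (fst x), P (Suc n) (fst x), snd x)) \<in> measurable (M \<Otimes>\<^sub>M borel) (borel \<Otimes>\<^sub>M borel \<Otimes>\<^sub>M borel)"
    by measurable
  from measurable_compose[OF this G]
  have G_S_P [measurable]: "(\<lambda>x. G (S n (fst x)) (P (Suc n) (fst x)) (snd x)) \<in> borel_measurable (M \<Otimes>\<^sub>M borel)"
    by simp
  have [measurable]: "case_prod F \<in> borel_measurable (M \<Otimes>\<^sub>M lborel)"
    unfolding F_def case_prod_beta' by measurable
  have "(\<lambda>(s, p, x :: real). (s :: real, p :: real, s + x)) \<in> measurable (borel \<Otimes>\<^sub>M borel \<Otimes>\<^sub>M borel) (borel \<Otimes>\<^sub>M borel \<Otimes>\<^sub>M borel)"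
    by measurable
  from measurable_compose[OF this G]
  have G_shift: "(\<lambda>(s, p, x). G s p (s + x)) \<in> borel_measurable (borel \<Otimes>\<^sub>M borel \<Otimes>\<^sub>M borel)"
    by (simp add: case_prod_beta')
  have "(\<integral>\<^sup>+\<omega>. G (S n \<omega>) (P (Suc n) \<omega>) (S (Suc n) \<omega>) \<partial>M)
      = (\<integral>\<^sup>+\<omega>. (\<integral>\<^sup>+x. ennreal (exponential_density l x) * G (S n \<omega>) (P (Suc n) \<omega>) (S n \<omega> + x) \<partial>lborel) \<partial>M)"
    using nn_integral_indep_Suc_S_P[OF G_shift] by (simp add: S_Suc)
  also have "\<dots> = (\<integral>\<^sup>+\<omega>. (\<integral>\<^sup>+v. F \<omega> v \<partial>lborel) \<partial>M)"
  proof (rule nn_integral_cong)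
    fix \<omega> assume "\<omega> \<in> space M"
    then have "(\<lambda>v. (\<omega>, v)) \<in> measurable borel (M \<Otimes>\<^sub>M borel)" by simp
    from measurable_compose[OF this G_S_P]
    have [measurable]: "G (S n \<omega>) (P (Suc n) \<omega>) \<in> borel_measurable borel" by simp
    have "F \<omega> \<in> borel_measurable borel" unfolding F_def by measurable
    from nn_integral_real_affine[OF this, of 1 "S n \<omega>"]
    show "(\<integral>\<^sup>+x. ennreal (exponential_density l x) * G (S n \<omega>) (P (Suc n) \<omega>) (S n \<omega> + x) \<partial>lborel)
        = (\<integral>\<^sup>+v. F \<omega> v \<partial>lborel)"
      by (simp add: F_def)
  qed
  also have "\<dots> = (\<integral>\<^sup>+v. (\<integral>\<^sup>+\<omega>. F \<omega> v \<partial>M) \<partial>lborel)"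
    by (rule Fubini'[symmetric]) measurable
  finally show ?thesis by (simp add: F_def)
qed

lemma nn_integral_indicator_P_le_0:
  assumes [measurable]: "h \<in> borel_measurable borel"
  shows "(\<integral>\<^sup>+\<omega>. indicator {..y} (P (Suc 0) \<omega>) * h (S 0 \<omega>) \<partial>M)
    = (\<integral>\<^sup>+u. indicator {0<..} u * h u * ennreal (l ^ Suc 0 * exp (- l * u) * simplex_prod_vol 0 u y) \<partial>lborel)"
proof -
  have "(\<integral>\<^sup>+\<omega>. indicator {..y} (P (Suc 0) \<omega>) * h (S 0 \<omega>) \<partial>M)
      = (\<integral>\<^sup>+x. ennreal (exponential_density l x) * (indicator {..y} x * h x) \<partial>lborel)"
    unfolding P_def S_def by (simp add: nn_integral_E[of "\<lambda>x. indicator {..y} x * h x"])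
  also have "\<dots> = (\<integral>\<^sup>+u. indicator {0<..} u * h u * ennreal (l ^ Suc 0 * exp (- l * u) * simplex_prod_vol 0 u y) \<partial>lborel)"
    using AE_lborel_singleton[of 0]
    by (intro nn_integral_cong_AE, eventually_elim)
       (auto simp: exponential_density_def simplex_prod_vol_def indicator_def mult.commute)
  finally show ?thesis .
qed

lemma nn_integral_indicator_P_le:
  assumes "0 < y" and "h \<in> borel_measurable borel"
  shows "(\<integral>\<^sup>+\<omega>. indicator {..y} (P (Suc n) \<omega>) * h (S n \<omega>) \<partial>M)
    = (\<integral>\<^sup>+u. indicator {0<..} u * h u * ennreal (l ^ Suc n * exp (- l * u) * simplex_prod_vol n u y) \<partial>lborel)"
  using assms
proof (induction n arbitrary: y h)
  case 0
  then show ?case by (intro nn_integral_indicator_P_le_0)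
next
  case (Suc n)
  note [measurable] = \<open>h \<in> borel_measurable borel\<close>
  define F where "F \<omega> v = ennreal (exponential_density l (v - S n \<omega>)) * (indicator {..y} (P (Suc n) \<omega> * v) * h v)"
    for \<omega> v
  have "(\<integral>\<^sup>+\<omega>. indicator {..y} (P (Suc (Suc n)) \<omega>) * h (S (Suc n) \<omega>) \<partial>M)
      = (\<integral>\<^sup>+v. (\<integral>\<^sup>+\<omega>. F \<omega> v \<partial>M) \<partial>lborel)"
    using nn_integral_density_S_Suc[of "\<lambda>s p v. indicator {..y} (p * v) * h v" n]
    by (simp add: F_def P_Suc[of "Suc n"])
  also have "\<dots> = (\<integral>\<^sup>+v. indicator {0<..} v * h v
      * ennreal (l ^ Suc (Suc n) * exp (- l * v) * simplex_prod_vol (Suc n) v y) \<partial>lborel)"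
  proof (rule nn_integral_cong_AE)
    show "AE v in lborel. (\<integral>\<^sup>+\<omega>. F \<omega> v \<partial>M) = indicator {0<..} v * h v
        * ennreal (l ^ Suc (Suc n) * exp (- l * v) * simplex_prod_vol (Suc n) v y)"
      using AE_lborel_singleton[of 0]
    proof eventually_elim
      case (elim v)
      show ?case
      proof (cases "0 < v")
        case False
        have "AE \<omega> in M. F \<omega> v = 0"
          using AE_S_pos[of n]
          by eventually_elim (use False elim in \<open>simp add: F_def exponential_density_def\<close>)
        then have "(\<integral>\<^sup>+\<omega>. F \<omega> v \<partial>M) = (\<integral>\<^sup>+\<omega>. 0 \<partial>M)" by (rule nn_integral_cong_AE)
        then show ?thesis using False by simp
      next
        case True
        have "(\<integral>\<^sup>+\<omega>. F \<omega> v \<partial>M) = (ennreal (l * exp (- l * v)) * h v)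
            * (\<integral>\<^sup>+\<omega>. indicator {..y / v} (P (Suc n) \<omega>) * (indicator {..v} (S n \<omega>) * ennreal (exp (l * S n \<omega>))) \<partial>M)"
          using True rate_pos
          by (subst nn_integral_cmult[symmetric])
             (auto intro!: nn_integral_cong simp: F_def ennreal_exponential_density_diff
               indicator_def pos_le_divide_eq ac_simps)
        also have "(\<integral>\<^sup>+\<omega>. indicator {..y / v} (P (Suc n) \<omega>) * (indicator {..v} (S n \<omega>) * ennreal (exp (l * S n \<omega>))) \<partial>M)
            = (\<integral>\<^sup>+u. indicator {0<..} u * (indicator {..v} u * ennreal (exp (l * u)))
                * ennreal (l ^ Suc n * exp (- l * u) * simplex_prod_vol n u (y / v)) \<partial>lborel)"
          using True Suc.prems by (intro Suc.IH) auto
        also have "\<dots> = ennreal (l ^ Suc n * simplex_prod_vol (Suc n) v y)"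
          using True Suc.prems rate_pos by (intro nn_integral_simplex_prod_vol_exp) auto
        finally show ?thesis
          using True Suc.prems rate_pos simplex_prod_vol_nonneg[of v y "Suc n"]
          by (simp add: ennreal_mult[symmetric] ac_simps)
      qed
    qed
  qed
  finally show ?case .
qed

definition crossing :: "nat \<Rightarrow> real \<Rightarrow> 'a set" where
  "crossing n y = {\<omega> \<in> space M. (\<forall>i<n. S i \<omega> \<le> 1) \<and> 1 < S n \<omega> \<and> P n \<omega> \<le> y}"

lemma sets_crossing [measurable]: "crossing n y \<in> sets M"
  unfolding crossing_def by measurable

lemma crossing_unique: "\<omega> \<in> crossing n y \<Longrightarrow> \<omega> \<in> crossing k z \<Longrightarrow> n = k"
  by (cases n k rule: linorder_cases) (auto simp: crossing_def)

lemma emeasure_crossing_0: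
  "emeasure M (crossing 0 y) = ennreal (l ^ 0 * exp (- l) * simplex_prod_vol 0 1 y)"
proof (cases "1 \<le> y")
  case True
  then have "crossing 0 y = {\<omega> \<in> space M. 1 < E 0 \<omega>}" by (auto simp: crossing_def S_def P_def)
  then show ?thesis
    using True exponential_distributedD_gt[OF distributed_E _ rate_pos, of 1]
    by (simp add: emeasure_eq_measure simplex_prod_vol_def)
qed (auto simp: crossing_def P_def simplex_prod_vol_def)

lemma emeasure_crossing_Suc:
  assumes "0 < y"
  shows "emeasure M (crossing (Suc m) y) = ennreal (l ^ Suc m * exp (- l) * simplex_prod_vol (Suc m) 1 y)"
proof -
  define G where "G s p x = indicator {..y} p * (indicator {..1} s * indicator {1<..} (s + x) :: ennreal)"
    for s p x :: real
  define h where "h s = indicator {..1} s * ennreal (exp (l * s))" for s :: real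
  let ?C = "{\<omega> \<in> space M. S m \<omega> \<le> 1 \<and> 1 < S (Suc m) \<omega> \<and> P (Suc m) \<omega> \<le> y}"
  have "AE \<omega> in M. \<omega> \<in> crossing (Suc m) y \<longleftrightarrow> \<omega> \<in> ?C"
    using AE_E_pos by eventually_elim (auto simp: crossing_def less_Suc_eq_le intro: order_trans[OF S_mono])
  then have "emeasure M (crossing (Suc m) y) = (\<integral>\<^sup>+\<omega>. indicator ?C \<omega> \<partial>M)"
    by (simp add: emeasure_eq_AE nn_integral_indicator)
  also have "\<dots> = (\<integral>\<^sup>+\<omega>. G (S m \<omega>) (P (Suc m) \<omega>) (E (Suc m) \<omega>) \<partial>M)"
    by (auto intro!: nn_integral_cong simp: indicator_def G_def S_Suc)
  also have "\<dots> = (\<integral>\<^sup>+\<omega>. (\<integral>\<^sup>+x. ennreal (exponential_density l x) * G (S m \<omega>) (P (Suc m) \<omega>) x \<partial>lborel) \<partial>M)"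
    by (rule nn_integral_indep_Suc_S_P) (simp add: G_def[abs_def])
  also have "\<dots> = (\<integral>\<^sup>+\<omega>. ennreal (exp (- l)) * (indicator {..y} (P (Suc m) \<omega>) * h (S m \<omega>)) \<partial>M)"
  proof (rule nn_integral_cong)
    fix \<omega>
    show "(\<integral>\<^sup>+x. ennreal (exponential_density l x) * G (S m \<omega>) (P (Suc m) \<omega>) x \<partial>lborel)
        = ennreal (exp (- l)) * (indicator {..y} (P (Suc m) \<omega>) * h (S m \<omega>))"
    proof (cases "S m \<omega> \<le> 1")
      case True
      have "exp (- l * (1 - S m \<omega>)) = exp (- l) * exp (l * S m \<omega>)"
        by (simp add: exp_add[symmetric] algebra_simps)
      moreover have "(\<integral>\<^sup>+x. ennreal (exponential_density l x) * G (S m \<omega>) (P (Suc m) \<omega>) x \<partial>lborel)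
          = indicator {..y} (P (Suc m) \<omega>)
            * (\<integral>\<^sup>+x. ennreal (exponential_density l x) * indicator {1<..} (S m \<omega> + x) \<partial>lborel)"
        using True by (subst nn_integral_cmult[symmetric]) (auto intro!: nn_integral_cong simp: G_def ac_simps)
      ultimately show ?thesis
        using True nn_integral_exponential_density_gt[of "S m \<omega>" 1]
        by (simp add: h_def ennreal_mult ac_simps)
    qed (simp add: G_def h_def)
  qed
  also have "\<dots> = ennreal (exp (- l)) * (\<integral>\<^sup>+\<omega>. indicator {..y} (P (Suc m) \<omega>) * h (S m \<omega>) \<partial>M)"
    by (rule nn_integral_cmult) (simp add: h_def)
  also have "(\<integral>\<^sup>+\<omega>. indicator {..y} (P (Suc m) \<omega>) * h (S m \<omega>) \<partial>M)
      = (\<integral>\<^sup>+u. indicator {0<..} u * h u * ennreal (l ^ Suc m * exp (- l * u) * simplex_prod_vol m u y) \<partial>lborel)"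
    using assms by (intro nn_integral_indicator_P_le) (auto simp: h_def)
  also have "\<dots> = ennreal (l ^ Suc m * simplex_prod_vol (Suc m) 1 y)"
    using nn_integral_simplex_prod_vol_exp[of l 1 y m] assms rate_pos by (simp add: h_def)
  finally show ?thesis
    using assms rate_pos simplex_prod_vol_nonneg[of 1 y "Suc m"] by (simp add: ennreal_mult[symmetric] ac_simps)
qed

lemma emeasure_crossing:
  "0 < y \<Longrightarrow> emeasure M (crossing n y) = ennreal (l ^ n * exp (- l) * simplex_prod_vol n 1 y)"
  using emeasure_crossing_0 emeasure_crossing_Suc by (cases n) auto

lemma prodinf_min_S_eq_P:
  assumes pos: "\<And>i. 0 < E i \<omega>" and "\<omega> \<in> crossing n y"
  shows "(\<Prod>i. min (S i \<omega>) 1) = P n \<omega>"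
proof -
  have "1 < S i \<omega>" if "n \<le> i" for i
    using assms S_mono[OF pos that] by (auto simp: crossing_def)
  then have "(\<Prod>i. min (S i \<omega>) 1) = (\<Prod>i<n. min (S i \<omega>) 1)"
    by (intro prodinf_finite) auto
  also have "\<dots> = P n \<omega>"
    using assms by (auto simp: P_def crossing_def intro!: prod.cong)
  finally show ?thesis .
qed

lemma AE_crossing: "AE \<omega> in M. \<exists>n. \<omega> \<in> crossing n 1"
proof -
  have exp_sums: "(\<lambda>n. l ^ n * exp (- l) / fact n) sums (exp l * exp (- l))"
    using sums_mult2[OF exp_converges[of l], of "exp (- l)"] by (simp add: field_simps)
  have "emeasure M (\<Union>n. crossing n 1) = (\<Sum>n. emeasure M (crossing n 1))"
    by (intro suminf_emeasure[symmetric]) (auto simp: disjoint_family_on_def dest: crossing_unique)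
  also have "\<dots> = (\<Sum>n. ennreal (l ^ n * exp (- l) / fact n))"
    by (simp add: emeasure_crossing simplex_prod_vol_def)
  also have "\<dots> = 1"
    using exp_sums rate_pos by (simp add: suminf_ennreal2 sums_iff mult_exp_exp)
  finally have "prob (\<Union>n. crossing n 1) = 1" by (simp add: emeasure_eq_measure)
  then have "AE \<omega> in M. \<omega> \<in> (\<Union>n. crossing n 1)" by (subst AE_in_set_eq_1) auto
  then show ?thesis by simp
qed

lemma emeasure_prodinf_min_S_le:
  assumes "t \<le> 1"
  shows "emeasure M {\<omega> \<in> space M. (\<Prod>i. min (S i \<omega>) 1) \<le> t} = (\<Sum>n. emeasure M (crossing n t))"
proof -
  have "AE \<omega> in M. \<omega> \<in> {\<omega> \<in> space M. (\<Prod>i. min (S i \<omega>) 1) \<le> t} \<longleftrightarrow> \<omega> \<in> (\<Union>n. crossing n t)"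
    using AE_crossing AE_E_pos
  proof eventually_elim
    case (elim \<omega>)
    then obtain n where "\<omega> \<in> crossing n 1" by blast
    then show ?case
      using elim assms prodinf_min_S_eq_P[of \<omega> n 1] crossing_unique[of \<omega> n 1]
      by (auto simp: crossing_def)
  qed
  then have "emeasure M {\<omega> \<in> space M. (\<Prod>i. min (S i \<omega>) 1) \<le> t} = emeasure M (\<Union>n. crossing n t)"
    by (intro emeasure_eq_AE) auto
  also have "\<dots> = (\<Sum>n. emeasure M (crossing n t))"
    by (intro suminf_emeasure[symmetric]) (auto simp: disjoint_family_on_def dest: crossing_unique)
  finally show ?thesis .
qed

end

theorem theorem2:
  fixes M :: "'a measure" and E :: "nat \<Rightarrow> 'a \<Rightarrow> real" and l t :: real
  assumes "prob_space M"
    and "0 < l"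
    and "prob_space.indep_vars M (\<lambda>_. borel) E UNIV"
    and "\<And>i. distributed M lborel (E i) (exponential_density l)"
    and "0 < t" and "t < 1"
  shows "measure M {\<omega> \<in> space M. (\<Prod>i. min (\<Sum>k\<le>i. E k \<omega>) 1) \<le> t}
         = measure_pmf.prob (pair_pmf (poisson_pmf l) (poisson_pmf (- ln t))) {(n, m). m < n}"
proof -
  interpret iid_exponential M E l
    using assms by (simp add: iid_exponential_def iid_exponential_axioms_def)
  have "emeasure M {\<omega> \<in> space M. (\<Prod>i. min (\<Sum>k\<le>i. E k \<omega>) 1) \<le> t}
      = (\<Sum>n. emeasure M (crossing n t))"
    using emeasure_prodinf_min_S_le[of t] \<open>t < 1\<close> by (simp add: S_def)
  also have "\<dots> = (\<Sum>n. ennreal (pmf (poisson_pmf l) n * measure_pmf.prob (poisson_pmf (- ln t)) {..<n}))"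
    using assms by (simp add: emeasure_crossing poisson_pmf_prob_less)
  also have "\<dots> = emeasure (pair_pmf (poisson_pmf l) (poisson_pmf (- ln t))) {(n, m). m < n}"
    by (rule emeasure_pair_pmf_less[symmetric])
  finally show ?thesis by (simp add: measure_def)
qed

end
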